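(* For each of the ranking measures NDCG, MAP and AUC, with binary relevance vectors and top-1 feedback, there is a number of objects $m$ for which the global observability condition fails for the corresponding game: there exist learner actions $\sigma_i,\sigma_j$ with $\ell_i-\ell_j\notin\bigoplus_{k\in[m!]}\mathrm{Col}(S_k^\top)$.
   Context: Objects are $\{1,\dots,m\}$; learner actions are the permutations $\sigma_1,\dots,\sigma_{m!}$ of $[m]$ ($\sigma(i)$ = rank of object $i$, $\sigma^{-1}(j)$ = object at rank $j$); adversary actions are $r_1,\dots,r_{2^m}$ enumerating $\{0,1\}^m$. Measures: $NDCG(\sigma,r)=\frac{1}{Z(r)}\sum_{i=1}^m\frac{r(i)}{\log_2(1+\sigma(i))}$ with $Z(r)=\max_\sigma\sum_{i}\frac{r(i)}{\log_2(1+\sigma(i))}$; $MAP(\sigma,r)=\frac{1}{\|r\|_1}\sum_{i=1}^m\frac{\sum_{j\le i}\mathbb{1}(r(\sigma^{-1}(j))=1)}{i}\mathbb{1}(r(\sigma^{-1}(i))=1)$; $AUC(\sigma,r)=\frac{1}{N(r)}\sum_{i,j}\mathbb{1}(\sigma(i)<\sigma(j))\mathbb{1}(r(i)<r(j))$ with $N(r)=\|r\|_1(m-\|r\|_1)$ (for $r$ with $Z(r)$, $\|r\|_1$ or $N(r)$ zero the measure is taken to be a constant, e.g. $1$ for the gains NDCG, MAP and $0$ for the loss AUC). For a given measure $RL$, the loss (or gain) matrix has entries $L_{i,j}=RL(\sigma_i,r_j)$ with rows $\ell_i$; the feedback matrix has $H_{i,j}=r_j(\sigma_i^{-1}(1))$;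 the signal matrix $S_i\in\{0,1\}^{2\times2^m}$ has $(S_i)_{1,\ell}=\mathbb{1}(H_{i,\ell}=0)$, $(S_i)_{2,\ell}=\mathbb{1}(H_{i,\ell}=1)$. Global observability holds if $\ell_i-\ell_j\in\bigoplus_{k\in[m!]}\mathrm{Col}(S_k^\top)$ for all pairs $i,j$. *)

theory Defs
  imports Complex_Main "HOL-Combinatorics.Permutations"
begin

text \<open>A learner action is a permutation sigma of {1..m}
  (sigma i = rank of object i; inv sigma j = object at rank j).
  Adversary actions: binary relevance vectors r, represented as nat => nat
  with values in {0,1} on {1..m} and 0 outside (so there are exactly 2^m of them).\<close>

definition perms :: "nat \<Rightarrow> (nat \<Rightarrow> nat) set" where
  "perms m = {\<sigma>. \<sigma> permutes {1..m}}"

definition relvecs :: "nat \<Rightarrow> (nat \<Rightarrow> nat) set" where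
  "relvecs m = {r. (\<forall>i\<in>{1..m}. r i \<in> {0,1}) \<and> (\<forall>i. i \<notin> {1..m} \<longrightarrow> r i = 0)}"

definition norm1 :: "nat \<Rightarrow> (nat \<Rightarrow> nat) \<Rightarrow> nat" where
  "norm1 m r = (\<Sum>i=1..m. r i)"

definition DCG :: "nat \<Rightarrow> (nat \<Rightarrow> nat) \<Rightarrow> (nat \<Rightarrow> nat) \<Rightarrow> real" where
  "DCG m \<sigma> r = (\<Sum>i=1..m. real (r i) / log 2 (1 + real (\<sigma> i)))"

definition Zmax :: "nat \<Rightarrow> (nat \<Rightarrow> nat) \<Rightarrow> real" where
  "Zmax m r = Max ((\<lambda>\<tau>. DCG m \<tau> r) ` perms m)"

definition NDCG :: "nat \<Rightarrow> (nat \<Rightarrow> nat) \<Rightarrow> (nat \<Rightarrow> nat) \<Rightarrow> real" where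
  "NDCG m \<sigma> r = (if Zmax m r = 0 then 1 else DCG m \<sigma> r / Zmax m r)"

definition MAP :: "nat \<Rightarrow> (nat \<Rightarrow> nat) \<Rightarrow> (nat \<Rightarrow> nat) \<Rightarrow> real" where
  "MAP m \<sigma> r = (if norm1 m r = 0 then 1 else
     (1 / real (norm1 m r)) *
     (\<Sum>i=1..m. (real (card {j\<in>{1..i}. r (inv \<sigma> j) = 1}) / real i) *
                 (if r (inv \<sigma> i) = 1 then 1 else 0)))"

definition AUC :: "nat \<Rightarrow> (nat \<Rightarrow> nat) \<Rightarrow> (nat \<Rightarrow> nat) \<Rightarrow> real" where
  "AUC m \<sigma> r = (let N = norm1 m r * (m - norm1 m r) in
     if N = 0 then 0 else
     (1 / real N) * (\<Sum>i=1..m. \<Sum>j=1..m.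
        (if \<sigma> i < \<sigma> j then 1 else 0) * (if r i < r j then 1 else 0)))"

text \<open>Top-1 feedback H(sigma, r) = r(sigma^{-1}(1)); the signal matrix S_sigma has
  rows indexed by b in {0,1}: (S_sigma)_{b,r} = 1(H(sigma,r) = b).\<close>

definition feedback :: "(nat \<Rightarrow> nat) \<Rightarrow> (nat \<Rightarrow> nat) \<Rightarrow> nat" where
  "feedback \<sigma> r = r (inv \<sigma> 1)"

definition signal :: "(nat \<Rightarrow> nat) \<Rightarrow> nat \<Rightarrow> (nat \<Rightarrow> nat) \<Rightarrow> real" where
  "signal \<sigma> b r = (if feedback \<sigma> r = b then 1 else 0)"

text \<open>Global observability: for all learner actions sigma, tau, the difference of loss rows
  (vectors indexed by the relevance vectors) lies in the sum over all k of Col(S_k^T),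
  i.e. equals sum_k S_k^T v_k for some v_k in R^2.\<close>

definition globally_observable ::
  "nat \<Rightarrow> (nat \<Rightarrow> (nat \<Rightarrow> nat) \<Rightarrow> (nat \<Rightarrow> nat) \<Rightarrow> real) \<Rightarrow> bool" where
  "globally_observable m RL \<longleftrightarrow>
     (\<forall>\<sigma>\<in>perms m. \<forall>\<tau>\<in>perms m. \<exists>v :: (nat \<Rightarrow> nat) \<Rightarrow> nat \<Rightarrow> real.
        \<forall>r\<in>relvecs m. RL m \<sigma> r - RL m \<tau> r =
          (\<Sum>\<rho>\<in>perms m. \<Sum>b\<in>{0,1}. v \<rho> b * signal \<rho> b r))"

end

theory Submission
  imports Defs
begin

text \<open>Top-1 feedback reveals only the single coordinate r(inv \<rho> 1) of r, so every
  vector in the span of the signal rows is modular on indicator vectors of sets: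
  f(1_{}) + f(1_(A \<union> B)) = f(1_A) + f(1_B) for disjoint A and B. With four objects,
  the identity ranking and the ranking swapping ranks 2 and 3 have a loss difference
  that is not modular for A = {3}, B = {4}, under each of NDCG, MAP and AUC.\<close>

definition relevance :: "nat set \<Rightarrow> nat \<Rightarrow> nat" where
  "relevance S i = (if i \<in> S then 1 else 0)"

lemma relevance_in_relvecs: "S \<subseteq> {1..m} \<Longrightarrow> relevance S \<in> relvecs m"
  by (auto simp: relvecs_def relevance_def)

lemma signal_relevance_modular:
  assumes "A \<inter> B = {}"
  shows "signal \<rho> b (relevance {}) + signal \<rho> b (relevance (A \<union> B))
       = signal \<rho> b (relevance A) + signal \<rho> b (relevance B)"
  using assms by (auto simp: signal_def feedback_def relevance_def)

lemma globally_observable_gap_modular: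
  assumes obs: "globally_observable m RL" and "\<sigma> \<in> perms m" "\<tau> \<in> perms m"
    and AB: "A \<union> B \<subseteq> {1..m}" "A \<inter> B = {}"
  defines "gap S \<equiv> RL m \<sigma> (relevance S) - RL m \<tau> (relevance S)"
  shows "gap {} + gap (A \<union> B) = gap A + gap B"
proof -
  obtain v where v: "\<And>r. r \<in> relvecs m \<Longrightarrow> RL m \<sigma> r - RL m \<tau> r =
      (\<Sum>\<rho>\<in>perms m. \<Sum>b\<in>{0,1}. v \<rho> b * signal \<rho> b r)"
    using obs assms(2,3) unfolding globally_observable_def by blast
  have gap: "gap S = (\<Sum>\<rho>\<in>perms m. \<Sum>b\<in>{0,1}. v \<rho> b * signal \<rho> b (relevance S))"
    if "S \<subseteq> A \<union> B" for S
    unfolding gap_def using that AB(1) by (intro v relevance_in_relvecs) auto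
  have "v \<rho> b * signal \<rho> b (relevance {}) + v \<rho> b * signal \<rho> b (relevance (A \<union> B))
      = v \<rho> b * signal \<rho> b (relevance A) + v \<rho> b * signal \<rho> b (relevance B)" for \<rho> b
    by (simp only: distrib_left[symmetric] signal_relevance_modular[OF AB(2)])
  then show ?thesis
    by (simp only: gap Un_upper1 Un_upper2 empty_subsetI order_refl sum.distrib[symmetric])
qed

lemma finite_perms: "finite (perms m)"
  unfolding perms_def by (rule finite_permutations) simp

lemma DCG_le_Zmax: "\<tau> \<in> perms m \<Longrightarrow> DCG m \<tau> r \<le> Zmax m r"
  unfolding Zmax_def by (simp add: finite_perms)

lemma DCG_relevance_singleton:
  assumes "k \<in> {1..m}"
  shows "DCG m \<rho> (relevance {k}) = 1 / log 2 (1 + real (\<rho> k))"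
proof -
  have "DCG m \<rho> (relevance {k}) = (\<Sum>i\<in>{1..m}. if i = k then 1 / log 2 (1 + real (\<rho> i)) else 0)"
    unfolding DCG_def relevance_def by (intro sum.cong) auto
  also have "\<dots> = 1 / log 2 (1 + real (\<rho> k))"
    using assms by simp
  finally show ?thesis .
qed

lemma Zmax_relevance_singleton:
  assumes k: "k \<in> {1..m}"
  shows "Zmax m (relevance {k}) = 1"
proof (rule antisym)
  have "DCG m \<rho> (relevance {k}) \<le> 1" if "\<rho> \<in> perms m" for \<rho>
  proof -
    have "\<rho> k \<in> {1..m}"
      using that k permutes_in_image by (fastforce simp: perms_def)
    then have "1 \<le> log 2 (1 + real (\<rho> k))" by simp
    then show ?thesis using k by (simp add: DCG_relevance_singleton)
  qed
  moreover have "perms m \<noteq> {}"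
    unfolding perms_def using permutes_id by blast
  ultimately show "Zmax m (relevance {k}) \<le> 1"
    unfolding Zmax_def by (simp add: finite_perms)
  have "Transposition.transpose 1 k \<in> perms m"
    using k by (simp add: perms_def permutes_swap_id)
  moreover have "DCG m (Transposition.transpose 1 k) (relevance {k}) = 1"
    using k by (simp add: DCG_relevance_singleton)
  ultimately show "1 \<le> Zmax m (relevance {k})"
    by (metis DCG_le_Zmax)
qed

abbreviation swap23 :: "nat \<Rightarrow> nat" where
  "swap23 \<equiv> Transposition.transpose 2 3"

lemma not_globally_observable_4:
  assumes "RL 4 id (relevance {}) - RL 4 swap23 (relevance {})
         + (RL 4 id (relevance {3,4}) - RL 4 swap23 (relevance {3,4}))
         \<noteq> RL 4 id (relevance {3}) - RL 4 swap23 (relevance {3})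
         + (RL 4 id (relevance {4}) - RL 4 swap23 (relevance {4}))"
  shows "\<not> globally_observable 4 RL"
proof
  have "id \<in> perms 4" "swap23 \<in> perms 4"
    by (simp_all add: perms_def permutes_id permutes_swap_id)
  moreover assume "globally_observable 4 RL"
  ultimately show False
    using globally_observable_gap_modular[of 4 RL id swap23 "{3}" "{4}"] assms
    by (simp add: insert_commute)
qed

lemma initial_segments_4:
  "{1..1::nat} = {1}" "{1..2::nat} = {1,2}" "{1..3::nat} = {1,2,3}" "{1..4::nat} = {1,2,3,4}"
  by auto

lemma sum_1_to_4: "sum f {1..4::nat} = f 1 + f 2 + f 3 + f 4"
  unfolding initial_segments_4 by (simp add: add.assoc)

lemma Collect_mem_insert:
  "{x \<in> insert a A. P x} = (if P a then insert a {x \<in> A. P x} else {x \<in> A. P x})"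
  by auto

lemma MAP_not_globally_observable: "\<not> globally_observable 4 MAP"
  \<comment> \<open>the differences id - swap23 at {}, {3,4}, {3}, {4} are 0, -1/12, -1/6, 0\<close>
  by (rule not_globally_observable_4)
    (unfold MAP_def norm1_def sum_1_to_4, unfold initial_segments_4 Collect_mem_insert,
     simp add: relevance_def)

lemma AUC_not_globally_observable: "\<not> globally_observable 4 AUC"
  \<comment> \<open>the differences id - swap23 at {}, {3,4}, {3}, {4} are 0, 1/4, 1/3, 0\<close>
  by (rule not_globally_observable_4) (unfold AUC_def norm1_def sum_1_to_4, simp add: relevance_def)

lemma NDCG_not_globally_observable: "\<not> globally_observable 4 NDCG"
proof -
  define D where "D = 1/2 - 1 / log 2 (3::real)"
  define Z where "Z = Zmax 4 (relevance {3,4})"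
  have "log 2 (3::real) < log 2 4"
    by simp
  moreover have log_2_4: "log 2 (4::real) = 2"
    using log_pow_cancel[of "2::real" 2] by simp
  ultimately have "D \<noteq> 0" and log3_pos: "0 < 1 / log 2 (3::real)"
    unfolding D_def by auto
  define \<rho> :: "nat \<Rightarrow> nat" where "\<rho> = Transposition.transpose 1 3 \<circ> Transposition.transpose 2 4"
  have "1 + 1 / log 2 3 = DCG 4 \<rho> (relevance {3,4})"
    unfolding \<rho>_def DCG_def sum_1_to_4 by (simp add: relevance_def)
  also have "\<dots> \<le> Z"
    unfolding Z_def \<rho>_def
    by (rule DCG_le_Zmax) (auto simp: perms_def intro!: permutes_compose permutes_swap_id)
  finally have "1 < Z"
    using log3_pos by linarith
  moreover have "NDCG 4 id (relevance {3}) - NDCG 4 swap23 (relevance {3}) = D"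
    unfolding NDCG_def Zmax_relevance_singleton[of 3 4, simplified] D_def DCG_def sum_1_to_4
    by (simp add: relevance_def log_2_4)
  moreover have "NDCG 4 id (relevance {3,4}) - NDCG 4 swap23 (relevance {3,4}) = D / Z"
    unfolding NDCG_def Z_def[symmetric] D_def DCG_def sum_1_to_4
    using \<open>1 < Z\<close> log3_pos by (simp add: relevance_def log_2_4 field_simps)
  moreover have "NDCG 4 id (relevance {}) = NDCG 4 swap23 (relevance {})"
    "NDCG 4 id (relevance {4}) = NDCG 4 swap23 (relevance {4})"
    unfolding NDCG_def DCG_def sum_1_to_4 by (simp_all add: relevance_def)
  ultimately show ?thesis
    using \<open>D \<noteq> 0\<close> \<open>1 < Z\<close> by (intro not_globally_observable_4) (simp add: divide_eq_eq)
qed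

theorem lemma4:
  shows "(\<exists>m. \<not> globally_observable m NDCG) \<and>
         (\<exists>m. \<not> globally_observable m MAP) \<and>
         (\<exists>m. \<not> globally_observable m AUC)"
  using NDCG_not_globally_observable MAP_not_globally_observable AUC_not_globally_observable
  by blast

end
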